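(* Let $T \ge 1$ and let $Q_0, \ldots, Q_T$ be real matrices with $Q_t \in \mathbb R^{p_t \times n_x}$, such that the row space of $Q_t$ contains the row space of $Q_{t+1}$ for $t = 0, \ldots, T-1$. For vectors $\rho_{t+1|0} \in \mathbb R^{p_{t+1}}$, $t = 0, \ldots, T-1$, define $\rho_{t|1} := (Q_t')^+ Q_{t+1}' \rho_{t+1|0}$ for $t = 0,\ldots,T-1$ and $$\pi_5 := \frac14 \sum_{t=0}^{T-1} \big(|\rho_{t+1|0}|^2 - |\rho_{t|1}|^2\big).$$ Then $\pi_5 \ge 0$ for all $\rho_{1|0}, \ldots, \rho_{T|0}$ if and only if $\|Q_{t+1} Q_t^+\| \le 1$ for $t = 0, \ldots, T-1$.
   Context: For a matrix $M$, $M'$ is its transpose, $M^+$ its Moore–Penrose pseudoinverse, and $\|M\|$ its maximum singular value. $|\cdot|$ is the Euclidean norm. *)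

theory Defs
  imports "Jordan_Normal_Form.Char_Poly"
begin

definition row_space :: "real mat \<Rightarrow> real vec set" where
  "row_space A = {transpose_mat A *\<^sub>v y | y. y \<in> carrier_vec (dim_row A)}"

definition pinv :: "real mat \<Rightarrow> real mat" where
  "pinv A = (THE X. X \<in> carrier_mat (dim_col A) (dim_row A) \<and>
      A * X * A = A \<and> X * A * X = X \<and>
      transpose_mat (A * X) = A * X \<and> transpose_mat (X * A) = X * A)"

definition max_sv :: "real mat \<Rightarrow> real" where
  "max_sv M = sqrt (Max (insert 0 {l. eigenvalue (transpose_mat M * M) l}))"

definition vnorm :: "real vec \<Rightarrow> real" where
  "vnorm v = sqrt (v \<bullet> v)"

end

(*
  Put X_t = Q_{t+1} Q_t^+. The pseudoinverse commutes with transposition, so rho_{t|1} = X_t' rho_{t+1|0}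
  and pi_5 is a sum of independent terms |rho|^2 - |X_t' rho|^2, each vanishing at rho = 0. Hence
  pi_5 >= 0 for all choices iff every X_t' is a contraction, iff every X_t is one (Cauchy-Schwarz),
  iff all eigenvalues of X_t' X_t are at most 1: a maximiser of the Rayleigh quotient of a symmetric
  matrix exists by compactness of the sphere and is an eigenvector.

  The pseudoinverse exists: if R is the orthogonal projection onto the row space of A (built by
  rank-one Gram-Schmidt updates), then M = A'A + (I - R) is invertible and M^-1 A' satisfies the
  four Penrose equations.
*)
theory Submission
  imports Defs "Jordan_Normal_Form.Spectral_Radius" "HOL-Analysis.Function_Topology" "HOL-Analysis.Convex"
begin

unbundle no inner_syntax

section \<open>Euclidean norm of vectors\<close>

lemma smult_zero_vec [simp]: "(k :: 'a :: mult_zero) \<cdot>\<^sub>v 0\<^sub>v n = 0\<^sub>v n"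
  by (intro eq_vecI) auto

lemma mult_mat_vec_zero [simp]: "A \<in> carrier_mat m n \<Longrightarrow> A *\<^sub>v 0\<^sub>v n = (0\<^sub>v m :: 'a :: semiring_0 vec)"
  by (intro eq_vecI) auto

lemma scalar_prod_self_nonneg: "0 \<le> (v :: real vec) \<bullet> v"
  using conjugate_square_ge_0_vec[of v] by simp

lemma scalar_prod_self_eq_0_iff:
  "(v :: real vec) \<in> carrier_vec n \<Longrightarrow> v \<bullet> v = 0 \<longleftrightarrow> v = 0\<^sub>v n"
  using conjugate_square_eq_0_vec[of v n] by simp

lemma scalar_prod_self_pos_iff:
  "(v :: real vec) \<in> carrier_vec n \<Longrightarrow> 0 < v \<bullet> v \<longleftrightarrow> v \<noteq> 0\<^sub>v n"
  using conjugate_square_greater_0_vec[of v n] by simp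

lemma symmetric_mat_scalar_prod_swap:
  fixes R :: "real mat"
  assumes "R \<in> carrier_mat n n" "R\<^sup>T = R" "x \<in> carrier_vec n" "y \<in> carrier_vec n"
  shows "(R *\<^sub>v x) \<bullet> y = x \<bullet> (R *\<^sub>v y)"
  using transpose_vec_mult_scalar[of R n n y x] assms by simp

lemma vnorm_nonneg: "0 \<le> vnorm v"
  unfolding vnorm_def by (simp add: scalar_prod_self_nonneg)

lemma vnorm_zero [simp]: "vnorm (0\<^sub>v n) = 0"
  unfolding vnorm_def by simp

lemma vnorm_square: "(vnorm v)\<^sup>2 = v \<bullet> v"
  unfolding vnorm_def using scalar_prod_self_nonneg[of v] by simp

lemma vnorm_le_iff: "vnorm v \<le> c * vnorm w \<longleftrightarrow> v \<bullet> v \<le> c\<^sup>2 * (w \<bullet> w)" if "0 \<le> c"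
proof -
  have "vnorm v \<le> c * vnorm w \<longleftrightarrow> (vnorm v)\<^sup>2 \<le> (c * vnorm w)\<^sup>2"
    using that vnorm_nonneg[of v] vnorm_nonneg[of w] by simp
  thus ?thesis by (simp add: power_mult_distrib vnorm_square)
qed

lemma abs_scalar_prod_le_vnorm:
  assumes "x \<in> carrier_vec n" and "y \<in> carrier_vec n"
  shows "\<bar>x \<bullet> y\<bar> \<le> vnorm x * vnorm y"
proof -
  have "(x \<bullet> y)\<^sup>2 \<le> (x \<bullet> x) * (y \<bullet> y)"
    using assms Cauchy_Schwarz_ineq_sum[of "\<lambda>i. x $ i" "\<lambda>i. y $ i" "{0..<n}"]
    by (simp add: scalar_prod_def power2_eq_square)
  also have "\<dots> = (vnorm x * vnorm y)\<^sup>2"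
    by (simp add: power_mult_distrib vnorm_square)
  finally show ?thesis
    using vnorm_nonneg[of x] vnorm_nonneg[of y] by (simp add: power2_le_iff_abs_le)
qed

lemma norm_bound_of_transpose_norm_bound:
  assumes X: "X \<in> carrier_mat m n" and x: "x \<in> carrier_vec n" and c: "0 \<le> c"
    and bound: "\<And>y. y \<in> carrier_vec m \<Longrightarrow> vnorm (X\<^sup>T *\<^sub>v y) \<le> c * vnorm y"
  shows "vnorm (X *\<^sub>v x) \<le> c * vnorm x"
proof -
  define u where "u = X *\<^sub>v x"
  have u: "u \<in> carrier_vec m" unfolding u_def using X x by simp
  have "(vnorm u)\<^sup>2 = (X\<^sup>T *\<^sub>v u) \<bullet> x"
    unfolding vnorm_square u_def using transpose_vec_mult_scalar[OF X x] X x by simp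
  also have "\<dots> \<le> vnorm (X\<^sup>T *\<^sub>v u) * vnorm x"
    using abs_scalar_prod_le_vnorm[of "X\<^sup>T *\<^sub>v u" n x] X u x by simp
  also have "\<dots> \<le> c * vnorm u * vnorm x"
    using bound[OF u] vnorm_nonneg[of x] by (rule mult_right_mono)
  finally have "vnorm u * vnorm u \<le> vnorm u * (c * vnorm x)"
    by (simp add: power2_eq_square algebra_simps)
  thus ?thesis
    unfolding u_def[symmetric]
    using vnorm_nonneg[of u] vnorm_nonneg[of x] c by (cases "vnorm u = 0") auto
qed

lemma transpose_norm_bound_iff:
  assumes "X \<in> carrier_mat m n" and "0 \<le> c"
  shows "(\<forall>x\<in>carrier_vec n. vnorm (X *\<^sub>v x) \<le> c * vnorm x)
     \<longleftrightarrow> (\<forall>y\<in>carrier_vec m. vnorm (X\<^sup>T *\<^sub>v y) \<le> c * vnorm y)"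
  using norm_bound_of_transpose_norm_bound[of X m n _ c]
    norm_bound_of_transpose_norm_bound[of "X\<^sup>T" n m _ c] assms
  by auto


section \<open>Largest singular value\<close>

lemma linear_coeff_zero_if_quadratic_nonneg:
  fixes a b :: real
  assumes b: "0 \<le> b" and nonneg: "\<And>t. 0 \<le> 2 * t * a + t\<^sup>2 * b"
  shows "a = 0"
proof -
  have "b + 1 \<noteq> 0" using b by simp
  then have "2 * (- a / (b + 1)) * a + (- a / (b + 1))\<^sup>2 * b = - (a\<^sup>2 * (b + 2) / (b + 1)\<^sup>2)"
    by (simp add: power_divide divide_simps) (simp add: algebra_simps power2_eq_square)
  with nonneg[of "- a / (b + 1)"] have "a\<^sup>2 * (b + 2) / (b + 1)\<^sup>2 \<le> 0"
    by linarith
  with b have "a\<^sup>2 * (b + 2) \<le> 0"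
    by (simp add: divide_le_0_iff)
  with b show ?thesis
    by (simp add: mult_le_0_iff)
qed

lemma symmetric_quadratic_form_add:
  fixes C :: "real mat"
  assumes C: "C \<in> carrier_mat n n" "C\<^sup>T = C" and x: "x \<in> carrier_vec n" and y: "y \<in> carrier_vec n"
  shows "(x + y) \<bullet> (C *\<^sub>v (x + y)) = x \<bullet> (C *\<^sub>v x) + 2 * (y \<bullet> (C *\<^sub>v x)) + y \<bullet> (C *\<^sub>v y)"
proof -
  have "x \<bullet> (C *\<^sub>v y) = y \<bullet> (C *\<^sub>v x)"
    using transpose_vec_mult_scalar[OF C(1) x y] C x y by (simp add: comm_scalar_prod[of _ n])
  moreover have "(x + y) \<bullet> (C *\<^sub>v (x + y))
      = x \<bullet> (C *\<^sub>v x) + x \<bullet> (C *\<^sub>v y) + (y \<bullet> (C *\<^sub>v x) + y \<bullet> (C *\<^sub>v y))"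
    using C x y
    by (simp add: mult_add_distrib_mat_vec add_scalar_prod_distrib[of _ n] scalar_prod_add_distrib[of _ n])
  ultimately show ?thesis by simp
qed

lemma scalar_prod_add_self:
  fixes x y :: "real vec"
  assumes "x \<in> carrier_vec n" and "y \<in> carrier_vec n"
  shows "(x + y) \<bullet> (x + y) = x \<bullet> x + 2 * (y \<bullet> x) + y \<bullet> y"
  using symmetric_quadratic_form_add[of "1\<^sub>m n" n x y] assms by simp

lemma rayleigh_maximizer_is_eigenvector:
  fixes B :: "real mat"
  assumes B: "B \<in> carrier_mat n n" "B\<^sup>T = B"
    and bound: "\<And>x. x \<in> carrier_vec n \<Longrightarrow> x \<bullet> (B *\<^sub>v x) \<le> l * (x \<bullet> x)"
    and v: "v \<in> carrier_vec n" and attained: "v \<bullet> (B *\<^sub>v v) = l * (v \<bullet> v)"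
  shows "B *\<^sub>v v = l \<cdot>\<^sub>v v"
proof -
  \<comment> \<open>Perturbing v along w, the bound forces the first-order term 2 t |w|^2 to vanish.\<close>
  define w where "w = l \<cdot>\<^sub>v v - B *\<^sub>v v"
  have w: "w \<in> carrier_vec n" unfolding w_def using B v by simp
  have wv: "l * (w \<bullet> v) - w \<bullet> (B *\<^sub>v v) = w \<bullet> w"
    unfolding w_def using B v by (simp add: scalar_prod_minus_distrib[of _ n] algebra_simps)
  define a b where "a = w \<bullet> w" and "b = l * (w \<bullet> w) - w \<bullet> (B *\<^sub>v w)"
  have "0 \<le> 2 * t * a + t\<^sup>2 * b" for t
  proof -
    have "0 \<le> l * ((v + t \<cdot>\<^sub>v w) \<bullet> (v + t \<cdot>\<^sub>v w)) - (v + t \<cdot>\<^sub>v w) \<bullet> (B *\<^sub>v (v + t \<cdot>\<^sub>v w))"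
      using bound[of "v + t \<cdot>\<^sub>v w"] v w by simp
    also have "\<dots> = 2 * t * (l * (w \<bullet> v) - w \<bullet> (B *\<^sub>v v)) + t\<^sup>2 * b"
      using symmetric_quadratic_form_add[OF B v, of "t \<cdot>\<^sub>v w"] scalar_prod_add_self[OF v, of "t \<cdot>\<^sub>v w"]
        B v w attained
      by (simp add: mult_mat_vec b_def power2_eq_square algebra_simps)
    also have "\<dots> = 2 * t * a + t\<^sup>2 * b"
      unfolding wv a_def ..
    finally show ?thesis .
  qed
  moreover have "0 \<le> b"
    unfolding b_def using bound[OF w] by simp
  ultimately have "w \<bullet> w = 0"
    unfolding a_def using linear_coeff_zero_if_quadratic_nonneg by blast
  then have "w = 0\<^sub>v n"
    using scalar_prod_self_eq_0_iff[OF w] by simp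
  show ?thesis
  proof (rule eq_vecI)
    fix i assume "i < dim_vec (l \<cdot>\<^sub>v v)"
    with \<open>w = 0\<^sub>v n\<close> have "w $ i = 0" using v by simp
    then show "(B *\<^sub>v v) $ i = (l \<cdot>\<^sub>v v) $ i"
      using \<open>i < dim_vec (l \<cdot>\<^sub>v v)\<close> B v unfolding w_def by simp
  qed (use B v in simp)
qed

lemma quadratic_form_attains_max_on_unit_sphere:
  fixes B :: "real mat"
  assumes B: "B \<in> carrier_mat n n" and n: "0 < n"
  shows "\<exists>v\<in>carrier_vec n. v \<bullet> v = 1 \<and>
           (\<forall>x\<in>carrier_vec n. x \<bullet> x = 1 \<longrightarrow> x \<bullet> (B *\<^sub>v x) \<le> v \<bullet> (B *\<^sub>v v))"
proof -
  \<comment> \<open>Vectors of length n are encoded as functions vanishing from n on, so that compactness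
    of the unit sphere follows from that of a cube in the product topology.\<close>
  define S :: "nat \<Rightarrow> real set" where "S i = (if i < n then {-1..1} else {0})" for i
  define K where "K = {g \<in> PiE UNIV S. vec n g \<bullet> vec n g = 1}"
  define coords :: "real vec \<Rightarrow> nat \<Rightarrow> real" where "coords x i = (if i < n then x $ i else 0)" for x i
  have vec_coords: "vec n (coords x) = x" if "x \<in> carrier_vec n" for x
    using that by (auto simp: coords_def)
  have coords_in_K: "coords x \<in> K" if x: "x \<in> carrier_vec n" "x \<bullet> x = 1" for x
  proof -
    have "(x $ i)\<^sup>2 \<le> 1" if "i < n" for i
      using x that member_le_sum[of i "{0..<n}" "\<lambda>i. x $ i * x $ i"]
      by (simp add: scalar_prod_def power2_eq_square)
    then have "coords x i \<in> S i" for i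
      by (auto simp: coords_def S_def abs_square_le_1 abs_le_iff)
    then show ?thesis
      unfolding K_def using x vec_coords by auto
  qed
  have continuous_sq: "continuous_on UNIV (\<lambda>g :: nat \<Rightarrow> real. vec n g \<bullet> vec n g)"
    by (simp add: scalar_prod_def) (intro continuous_intros continuous_on_product_coordinates)
  have "compact (PiE UNIV S)"
    using compactin_PiE[of "\<lambda>_. euclidean" UNIV S]
    by (simp add: S_def euclidean_product_topology)
  moreover have "closed {g :: nat \<Rightarrow> real. vec n g \<bullet> vec n g = 1}"
    by (rule closed_Collect_eq[OF continuous_sq continuous_on_const])
  ultimately have "compact K"
    unfolding K_def by (simp add: Collect_conj_eq compact_Int_closed)
  moreover have "K \<noteq> {}"
    using coords_in_K[of "unit_vec n 0"] n by auto
  moreover have "continuous_on K (\<lambda>g. vec n g \<bullet> (B *\<^sub>v vec n g))"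
    using B by (simp add: scalar_prod_def)
      (intro continuous_intros continuous_on_subset[OF continuous_on_product_coordinates subset_UNIV])
  ultimately obtain g where g: "g \<in> K" and max: "\<forall>h\<in>K. vec n h \<bullet> (B *\<^sub>v vec n h) \<le> vec n g \<bullet> (B *\<^sub>v vec n g)"
    using continuous_attains_sup by blast
  show ?thesis
  proof (intro bexI conjI ballI impI)
    show "vec n g \<bullet> vec n g = 1" using g unfolding K_def by simp
    fix x :: "real vec" assume "x \<in> carrier_vec n" "x \<bullet> x = 1"
    then show "x \<bullet> (B *\<^sub>v x) \<le> vec n g \<bullet> (B *\<^sub>v vec n g)"
      using max coords_in_K vec_coords by metis
  qed simp
qed

lemma symmetric_mat_max_eigenvalue:
  fixes B :: "real mat"
  assumes B: "B \<in> carrier_mat n n" "B\<^sup>T = B" and n: "0 < n"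
  shows "\<exists>l. eigenvalue B l \<and> (\<forall>x\<in>carrier_vec n. x \<bullet> (B *\<^sub>v x) \<le> l * (x \<bullet> x))"
proof -
  obtain v where v: "v \<in> carrier_vec n" "v \<bullet> v = 1"
    and max: "\<forall>x\<in>carrier_vec n. x \<bullet> x = 1 \<longrightarrow> x \<bullet> (B *\<^sub>v x) \<le> v \<bullet> (B *\<^sub>v v)"
    using quadratic_form_attains_max_on_unit_sphere[OF B(1) n] by blast
  define l where "l = v \<bullet> (B *\<^sub>v v)"
  have rayleigh: "x \<bullet> (B *\<^sub>v x) \<le> l * (x \<bullet> x)" if x: "x \<in> carrier_vec n" for x
  proof (cases "x = 0\<^sub>v n")
    case True
    then show ?thesis using B by simp
  next
    case False
    define s where "s = 1 / vnorm x"
    have "0 < x \<bullet> x" using scalar_prod_self_pos_iff[OF x] False by simp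
    then have s2: "s\<^sup>2 * (x \<bullet> x) = 1"
      by (simp add: s_def power_divide vnorm_square)
    then have "(s \<cdot>\<^sub>v x) \<bullet> (s \<cdot>\<^sub>v x) = 1"
      using x by (simp add: power2_eq_square mult.assoc)
    then have "(s \<cdot>\<^sub>v x) \<bullet> (B *\<^sub>v (s \<cdot>\<^sub>v x)) \<le> l"
      using max x unfolding l_def by simp
    then have "s\<^sup>2 * (x \<bullet> (B *\<^sub>v x)) \<le> s\<^sup>2 * (l * (x \<bullet> x))"
      using x B s2 by (simp add: mult_mat_vec power2_eq_square algebra_simps)
    moreover have "0 < s\<^sup>2" using s2 by (cases "s = 0") auto
    ultimately show ?thesis by simp
  qed
  have "B *\<^sub>v v = l \<cdot>\<^sub>v v"
    using rayleigh_maximizer_is_eigenvector[OF B rayleigh v(1)] v unfolding l_def by simp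
  moreover have "v \<noteq> 0\<^sub>v n" using v by auto
  ultimately have "eigenvalue B l"
    unfolding eigenvalue_def eigenvector_def using B v by auto
  with rayleigh show ?thesis by blast
qed

lemma symmetric_eigenvalues_le_iff:
  fixes B :: "real mat"
  assumes B: "B \<in> carrier_mat n n" "B\<^sup>T = B"
  shows "(\<forall>e. eigenvalue B e \<longrightarrow> e \<le> c) \<longleftrightarrow> (\<forall>x\<in>carrier_vec n. x \<bullet> (B *\<^sub>v x) \<le> c * (x \<bullet> x))"
proof
  assume le: "\<forall>e. eigenvalue B e \<longrightarrow> e \<le> c"
  show "\<forall>x\<in>carrier_vec n. x \<bullet> (B *\<^sub>v x) \<le> c * (x \<bullet> x)"
  proof (cases "n = 0")
    case True
    then show ?thesis using B by (auto simp: scalar_prod_def)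
  next
    case False
    then obtain l where "eigenvalue B l" and rayleigh: "\<forall>x\<in>carrier_vec n. x \<bullet> (B *\<^sub>v x) \<le> l * (x \<bullet> x)"
      using symmetric_mat_max_eigenvalue[OF B] by blast
    with le have "l \<le> c" by blast
    then show ?thesis
      using rayleigh scalar_prod_self_nonneg by (meson mult_right_mono order_trans)
  qed
next
  assume bound: "\<forall>x\<in>carrier_vec n. x \<bullet> (B *\<^sub>v x) \<le> c * (x \<bullet> x)"
  show "\<forall>e. eigenvalue B e \<longrightarrow> e \<le> c"
  proof (intro allI impI)
    fix e assume "eigenvalue B e"
    then obtain v where v: "v \<in> carrier_vec n" "v \<noteq> 0\<^sub>v n" and Bv: "B *\<^sub>v v = e \<cdot>\<^sub>v v"
      unfolding eigenvalue_def eigenvector_def using B by auto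
    have "e * (v \<bullet> v) \<le> c * (v \<bullet> v)"
      using bound v Bv by auto
    moreover have "0 < v \<bullet> v" using scalar_prod_self_pos_iff[OF v(1)] v(2) by simp
    ultimately show "e \<le> c" by simp
  qed
qed

lemma max_sv_le_iff:
  fixes X :: "real mat"
  assumes X: "X \<in> carrier_mat m n" and c: "0 \<le> c"
  shows "max_sv X \<le> c \<longleftrightarrow> (\<forall>x\<in>carrier_vec n. vnorm (X *\<^sub>v x) \<le> c * vnorm x)"
proof -
  define B where "B = X\<^sup>T * X"
  have B: "B \<in> carrier_mat n n" "B\<^sup>T = B"
    unfolding B_def using X by (auto simp: transpose_mult[of _ n m _ n])
  have quadratic_form: "x \<bullet> (B *\<^sub>v x) = (X *\<^sub>v x) \<bullet> (X *\<^sub>v x)" if x: "x \<in> carrier_vec n" for x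
    unfolding B_def using X x transpose_vec_mult_scalar[OF X x, of "X *\<^sub>v x"]
    by (simp add: comm_scalar_prod[of x n])
  have "max_sv X \<le> c \<longleftrightarrow> Max (insert 0 (spectrum B)) \<le> c\<^sup>2"
    unfolding max_sv_def B_def spectrum_def using c sqrt_le_D real_le_lsqrt by blast
  also have "\<dots> \<longleftrightarrow> (\<forall>e. eigenvalue B e \<longrightarrow> e \<le> c\<^sup>2)"
    using card_finite_spectrum(1)[OF B(1)] by (simp add: spectrum_def)
  also have "\<dots> \<longleftrightarrow> (\<forall>x\<in>carrier_vec n. (X *\<^sub>v x) \<bullet> (X *\<^sub>v x) \<le> c\<^sup>2 * (x \<bullet> x))"
    using symmetric_eigenvalues_le_iff[OF B] quadratic_form by simp
  also have "\<dots> \<longleftrightarrow> (\<forall>x\<in>carrier_vec n. vnorm (X *\<^sub>v x) \<le> c * vnorm x)"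
    using vnorm_le_iff[OF c] by simp
  finally show ?thesis .
qed

lemma max_sv_le_one_iff_transpose:
  fixes X :: "real mat"
  assumes X: "X \<in> carrier_mat m n"
  shows "max_sv X \<le> 1 \<longleftrightarrow> (\<forall>y\<in>carrier_vec m. 0 \<le> (vnorm y)\<^sup>2 - (vnorm (X\<^sup>T *\<^sub>v y))\<^sup>2)"
proof -
  have "max_sv X \<le> 1 \<longleftrightarrow> (\<forall>x\<in>carrier_vec n. vnorm (X *\<^sub>v x) \<le> 1 * vnorm x)"
    using max_sv_le_iff[OF X] by simp
  also have "\<dots> \<longleftrightarrow> (\<forall>y\<in>carrier_vec m. vnorm (X\<^sup>T *\<^sub>v y) \<le> 1 * vnorm y)"
    using transpose_norm_bound_iff[OF X, of 1] by simp
  also have "\<dots> \<longleftrightarrow> (\<forall>y\<in>carrier_vec m. 0 \<le> (vnorm y)\<^sup>2 - (vnorm (X\<^sup>T *\<^sub>v y))\<^sup>2)"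
    using vnorm_le_iff[of 1] by (simp add: vnorm_square)
  finally show ?thesis .
qed


section \<open>Moore--Penrose pseudoinverse\<close>

definition is_orth_proj :: "nat \<Rightarrow> real vec set \<Rightarrow> real mat \<Rightarrow> bool" where
  "is_orth_proj n V R \<longleftrightarrow> R \<in> carrier_mat n n \<and> R\<^sup>T = R \<and>
     (\<forall>x\<in>carrier_vec n. R *\<^sub>v (R *\<^sub>v x) = R *\<^sub>v x) \<and> (\<forall>v\<in>V. R *\<^sub>v v = v) \<and>
     (\<forall>x\<in>carrier_vec n. (\<forall>v\<in>V. v \<bullet> x = 0) \<longrightarrow> R *\<^sub>v x = 0\<^sub>v n)"

lemma rank_one_mult_vec:
  fixes c x :: "real vec"
  assumes "c \<in> carrier_vec n" "x \<in> carrier_vec n"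
  shows "mat n n (\<lambda>(i, j). k * c $ i * c $ j) *\<^sub>v x = (k * (c \<bullet> x)) \<cdot>\<^sub>v c"
  using assms
  by (intro eq_vecI) (auto simp: scalar_prod_def row_def sum_distrib_left algebra_simps)

lemma is_orth_proj_empty: "is_orth_proj n {} (0\<^sub>m n n)"
  unfolding is_orth_proj_def by (auto intro!: eq_vecI simp: scalar_prod_def)

lemma is_orth_proj_insert_fixed:
  assumes "is_orth_proj n V R" and "R *\<^sub>v a = a"
  shows "is_orth_proj n (insert a V) R"
  using assms unfolding is_orth_proj_def by auto

lemma is_orth_proj_residual:
  assumes R: "is_orth_proj n V R" and V: "V \<subseteq> carrier_vec n" and a: "a \<in> carrier_vec n"
    and c: "c = a - R *\<^sub>v a"
  shows "c \<in> carrier_vec n" and "R *\<^sub>v c = 0\<^sub>v n" and "c \<bullet> a = c \<bullet> c"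
    and "\<And>v. v \<in> V \<Longrightarrow> c \<bullet> v = 0"
    and "\<And>x. x \<in> carrier_vec n \<Longrightarrow> c \<bullet> (R *\<^sub>v x) = 0"
    and "\<And>x. x \<in> carrier_vec n \<Longrightarrow> R *\<^sub>v x = 0\<^sub>v n \<Longrightarrow> a \<bullet> x = 0 \<Longrightarrow> c \<bullet> x = 0"
proof -
  have Rc: "R \<in> carrier_mat n n" "R\<^sup>T = R" and idem: "R *\<^sub>v (R *\<^sub>v a) = R *\<^sub>v a"
    and fixed: "\<And>v. v \<in> V \<Longrightarrow> R *\<^sub>v v = v"
    using R a unfolding is_orth_proj_def by auto
  show c_carrier: "c \<in> carrier_vec n" unfolding c using Rc a by simp
  show Rc_zero: "R *\<^sub>v c = 0\<^sub>v n"
    unfolding c using Rc a idem by (simp add: mult_minus_distrib_mat_vec)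
  show c_orth_R: "c \<bullet> (R *\<^sub>v x) = 0" if "x \<in> carrier_vec n" for x
    using symmetric_mat_scalar_prod_swap[OF Rc c_carrier that] Rc_zero that by simp
  show "c \<bullet> a = c \<bullet> c"
    using c_orth_R[OF a] a Rc unfolding c by (simp add: scalar_prod_minus_distrib[of _ n])
  show "c \<bullet> v = 0" if "v \<in> V" for v
    using symmetric_mat_scalar_prod_swap[OF Rc a, of v] fixed[OF that] V that a Rc
    unfolding c by (auto simp: minus_scalar_prod_distrib)
  show "c \<bullet> x = 0" if "x \<in> carrier_vec n" "R *\<^sub>v x = 0\<^sub>v n" "a \<bullet> x = 0" for x
    using symmetric_mat_scalar_prod_swap[OF Rc a that(1)] that a Rc
    unfolding c by (simp add: minus_scalar_prod_distrib)
qed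

lemma is_orth_proj_insert_rank_one:
  assumes R: "is_orth_proj n V R" and V: "V \<subseteq> carrier_vec n" and a: "a \<in> carrier_vec n"
    and c_def: "c = a - R *\<^sub>v a" and c: "c \<noteq> 0\<^sub>v n"
  shows "is_orth_proj n (insert a V) (R + mat n n (\<lambda>(i, j). c $ i * c $ j / (c \<bullet> c)))"
proof -
  let ?P = "mat n n (\<lambda>(i, j). c $ i * c $ j / (c \<bullet> c))"
  have Rc: "R \<in> carrier_mat n n" "R\<^sup>T = R" and idem: "\<And>x. x \<in> carrier_vec n \<Longrightarrow> R *\<^sub>v (R *\<^sub>v x) = R *\<^sub>v x"
    and fixed: "\<And>v. v \<in> V \<Longrightarrow> R *\<^sub>v v = v"
    and kills: "\<And>x. x \<in> carrier_vec n \<Longrightarrow> \<forall>v\<in>V. v \<bullet> x = 0 \<Longrightarrow> R *\<^sub>v x = 0\<^sub>v n"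
    using R unfolding is_orth_proj_def by auto
  note residual = is_orth_proj_residual[OF R V a c_def]
  have c_carrier: "c \<in> carrier_vec n" by (fact residual(1))
  have "0 < c \<bullet> c" using scalar_prod_self_pos_iff[OF c_carrier] c by simp
  have mult: "(R + ?P) *\<^sub>v x = R *\<^sub>v x + ((c \<bullet> x) / (c \<bullet> c)) \<cdot>\<^sub>v c" if "x \<in> carrier_vec n" for x
    using rank_one_mult_vec[OF c_carrier that, of "1 / (c \<bullet> c)"] Rc that
    by (simp add: add_mult_distrib_mat_vec[of _ n n] times_divide_eq_left)
  show ?thesis
    unfolding is_orth_proj_def
  proof (intro conjI ballI impI)
    show "R + ?P \<in> carrier_mat n n" using Rc by simp
    show "(R + ?P)\<^sup>T = R + ?P"
      using Rc by (intro eq_matI) (auto simp: transpose_add[of _ n n] mult.commute)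
  next
    fix x :: "real vec" assume x: "x \<in> carrier_vec n"
    define s where "s = (c \<bullet> x) / (c \<bullet> c)"
    have y: "R *\<^sub>v x + s \<cdot>\<^sub>v c \<in> carrier_vec n" using Rc x c_carrier by simp
    have "R *\<^sub>v (R *\<^sub>v x + s \<cdot>\<^sub>v c) = R *\<^sub>v x"
      using Rc x c_carrier residual(2) by (simp add: mult_add_distrib_mat_vec[of _ n n] mult_mat_vec idem)
    moreover have "c \<bullet> (R *\<^sub>v x + s \<cdot>\<^sub>v c) / (c \<bullet> c) = s"
      using Rc x c_carrier residual(5)[OF x] \<open>0 < c \<bullet> c\<close> by (simp add: scalar_prod_add_distrib[of _ n])
    ultimately show "(R + ?P) *\<^sub>v ((R + ?P) *\<^sub>v x) = (R + ?P) *\<^sub>v x"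
      unfolding mult[OF x] mult[OF y] s_def[symmetric] by simp
  next
    fix v assume "v \<in> insert a V"
    then consider "v = a" | "v \<in> V" by blast
    then show "(R + ?P) *\<^sub>v v = v"
    proof cases
      case 1
      have "(R + ?P) *\<^sub>v a = R *\<^sub>v a + c"
        using mult[OF a] residual(3) \<open>0 < c \<bullet> c\<close> by simp
      also have "\<dots> = a"
        unfolding c_def using Rc a by (intro eq_vecI) auto
      finally show ?thesis using 1 by simp
    next
      case 2
      with V have "v \<in> carrier_vec n" by blast
      then show ?thesis
        using mult fixed[OF 2] residual(4)[OF 2] c_carrier by (auto intro!: eq_vecI)
    qed
  next
    fix x :: "real vec" assume "x \<in> carrier_vec n" "\<forall>v\<in>insert a V. v \<bullet> x = 0"
    then show "(R + ?P) *\<^sub>v x = 0\<^sub>v n"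
      using mult kills residual(6) c_carrier by (auto intro!: eq_vecI)
  qed
qed

lemma is_orth_proj_exists:
  assumes "finite V" and "V \<subseteq> carrier_vec n"
  shows "\<exists>R. is_orth_proj n V R"
  using assms
proof (induction V rule: finite_induct)
  case empty
  then show ?case using is_orth_proj_empty by blast
next
  case (insert a V)
  then obtain R where R: "is_orth_proj n V R" by auto
  have a: "a \<in> carrier_vec n" and V: "V \<subseteq> carrier_vec n" using insert.prems by auto
  have R_carrier: "R \<in> carrier_mat n n" using R unfolding is_orth_proj_def by simp
  show ?case
  proof (cases "a - R *\<^sub>v a = 0\<^sub>v n")
    case True
    have "R *\<^sub>v a = a"
    proof (rule eq_vecI)
      fix i assume "i < dim_vec a"
      with True a have "(a - R *\<^sub>v a) $ i = 0" by simp
      with \<open>i < dim_vec a\<close> show "(R *\<^sub>v a) $ i = a $ i" using a R_carrier by simp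
    qed (use a R_carrier in simp)
    then show ?thesis using is_orth_proj_insert_fixed[OF R] by blast
  next
    case False
    then show ?thesis using is_orth_proj_insert_rank_one[OF R V a refl] by blast
  qed
qed

lemma eq_mat_if_mult_vec_eq:
  fixes A B :: "'a :: semiring_1 mat"
  assumes "A \<in> carrier_mat m n" "B \<in> carrier_mat m n"
    and "\<And>x. x \<in> carrier_vec n \<Longrightarrow> A *\<^sub>v x = B *\<^sub>v x"
  shows "A = B"
proof (rule eq_matI)
  fix i j assume "i < dim_row B" "j < dim_col B"
  moreover have "(A *\<^sub>v unit_vec n j) $ i = (B *\<^sub>v unit_vec n j) $ i"
    using assms(3) by simp
  ultimately show "A $$ (i, j) = B $$ (i, j)"
    using assms(1,2) by simp
qed (use assms in auto)

lemma row_space_projection_exists: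
  fixes A :: "real mat"
  assumes A: "A \<in> carrier_mat m n"
  obtains R where "R \<in> carrier_mat n n" "R\<^sup>T = R" "R * R = R" "A * R = A"
    "\<And>x. x \<in> carrier_vec n \<Longrightarrow> A *\<^sub>v x = 0\<^sub>v m \<Longrightarrow> R *\<^sub>v x = 0\<^sub>v n"
proof -
  obtain R where R: "is_orth_proj n (set (rows A)) R"
    using is_orth_proj_exists[of "set (rows A)" n] A set_rows_carrier by blast
  then have R_carrier: "R \<in> carrier_mat n n" and R_sym: "R\<^sup>T = R"
    and idem: "\<And>x. x \<in> carrier_vec n \<Longrightarrow> R *\<^sub>v (R *\<^sub>v x) = R *\<^sub>v x"
    and fixed: "\<And>i. i < m \<Longrightarrow> R *\<^sub>v row A i = row A i"
    and kills: "\<And>x. x \<in> carrier_vec n \<Longrightarrow> \<forall>i<m. row A i \<bullet> x = 0 \<Longrightarrow> R *\<^sub>v x = 0\<^sub>v n"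
    using A unfolding is_orth_proj_def by (auto simp: rows_def)
  show ?thesis
  proof
    show "R \<in> carrier_mat n n" "R\<^sup>T = R" by (fact R_carrier, fact R_sym)
    show "R * R = R"
      using R_carrier idem by (intro eq_mat_if_mult_vec_eq[of _ n n]) auto
    show "A * R = A"
    proof (rule eq_mat_if_mult_vec_eq[of _ m n])
      fix x :: "real vec" assume x: "x \<in> carrier_vec n"
      have "row A i \<bullet> (R *\<^sub>v x) = row A i \<bullet> x" if "i < m" for i
      proof -
        have "row A i \<in> carrier_vec n" using A by auto
        then show ?thesis
          using symmetric_mat_scalar_prod_swap[OF R_carrier R_sym _ x] fixed[OF that] by metis
      qed
      then show "A * R *\<^sub>v x = A *\<^sub>v x"
        using A R_carrier x by (intro eq_vecI) auto
    qed (use A R_carrier in auto)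
    fix x :: "real vec" assume x: "x \<in> carrier_vec n" and "A *\<^sub>v x = 0\<^sub>v m"
    then have "row A i \<bullet> x = 0" if "i < m" for i
      using A that by (metis carrier_matD(1) index_mult_mat_vec index_zero_vec(1))
    then show "R *\<^sub>v x = 0\<^sub>v n"
      using kills[OF x] by blast
  qed
qed

lemma inverse_of_symmetric_mat_is_symmetric:
  fixes M N :: "'a :: comm_ring_1 mat"
  assumes M: "M \<in> carrier_mat n n" "M\<^sup>T = M" and N: "N \<in> carrier_mat n n"
    and NM: "N * M = 1\<^sub>m n" and MN: "M * N = 1\<^sub>m n"
  shows "N\<^sup>T = N"
proof -
  have "N\<^sup>T * M = 1\<^sub>m n"
    using arg_cong[OF MN, of transpose_mat] M N by (simp add: transpose_mult)
  have "N\<^sup>T = N\<^sup>T * (M * N)" using MN N by simp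
  also have "\<dots> = (N\<^sup>T * M) * N" using M N by (simp add: assoc_mult_mat[of _ n n _ n _ n])
  finally show ?thesis using \<open>N\<^sup>T * M = 1\<^sub>m n\<close> N by simp
qed

lemma inverse_mat_commutes:
  fixes M N R :: "'a :: comm_ring_1 mat"
  assumes M: "M \<in> carrier_mat n n" and N: "N \<in> carrier_mat n n" and R: "R \<in> carrier_mat n n"
    and NM: "N * M = 1\<^sub>m n" and MN: "M * N = 1\<^sub>m n" and RM: "R * M = M * R"
  shows "N * R = R * N"
proof -
  have "N * R = N * (R * M) * N"
    using M N R MN by (simp add: assoc_mult_mat[of _ n n _ n _ n])
  also have "\<dots> = (N * M) * (R * N)"
    using M N R RM by (simp add: assoc_mult_mat[of _ n n _ n _ n])
  finally show ?thesis using NM R N by simp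
qed

definition is_pseudoinverse :: "real mat \<Rightarrow> real mat \<Rightarrow> bool" where
  "is_pseudoinverse A X \<longleftrightarrow> X \<in> carrier_mat (dim_col A) (dim_row A) \<and>
      A * X * A = A \<and> X * A * X = X \<and> (A * X)\<^sup>T = A * X \<and> (X * A)\<^sup>T = X * A"

lemma row_projection_mult_gram_plus_complement:
  fixes A R :: "real mat"
  assumes A: "A \<in> carrier_mat m n" and R: "R \<in> carrier_mat n n"
    and RR: "R * R = R" and AR: "A * R = A" and RAt: "R * A\<^sup>T = A\<^sup>T"
  shows "R * (A\<^sup>T * A + (1\<^sub>m n - R)) = A\<^sup>T * A" and "(A\<^sup>T * A + (1\<^sub>m n - R)) * R = A\<^sup>T * A"
proof -
  have AtA: "A\<^sup>T * A \<in> carrier_mat n n" using A by auto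
  have IR: "1\<^sub>m n - R \<in> carrier_mat n n" using minus_carrier_mat[OF R] .
  have "R * (A\<^sup>T * A + (1\<^sub>m n - R)) = R * (A\<^sup>T * A) + (R * 1\<^sub>m n - R * R)"
    using AtA IR R by (simp add: mult_add_distrib_mat[of R n n _ n] mult_minus_distrib_mat[of R n n _ n])
  also have "R * (A\<^sup>T * A) = A\<^sup>T * A"
    using A R RAt by (simp flip: assoc_mult_mat[of R n n "A\<^sup>T" m A n])
  finally show "R * (A\<^sup>T * A + (1\<^sub>m n - R)) = A\<^sup>T * A"
    using AtA R RR by simp
  have "(A\<^sup>T * A + (1\<^sub>m n - R)) * R = (A\<^sup>T * A) * R + (1\<^sub>m n * R - R * R)"
    using AtA IR R by (simp add: add_mult_distrib_mat[of _ n n _ R n] minus_mult_distrib_mat[of "1\<^sub>m n" n n R R n])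
  also have "(A\<^sup>T * A) * R = A\<^sup>T * A"
    using A R AR by (simp add: assoc_mult_mat[of "A\<^sup>T" n m A n R n])
  finally show "(A\<^sup>T * A + (1\<^sub>m n - R)) * R = A\<^sup>T * A"
    using AtA R RR by simp
qed

lemma gram_plus_projection_complement_nonsingular:
  fixes A R :: "real mat"
  assumes A: "A \<in> carrier_mat m n" and R: "R \<in> carrier_mat n n"
    and RM: "R * (A\<^sup>T * A + (1\<^sub>m n - R)) = A\<^sup>T * A"
    and kernel: "\<And>x. x \<in> carrier_vec n \<Longrightarrow> A *\<^sub>v x = 0\<^sub>v m \<Longrightarrow> R *\<^sub>v x = 0\<^sub>v n"
  shows "det (A\<^sup>T * A + (1\<^sub>m n - R)) \<noteq> 0"
proof -
  let ?M = "A\<^sup>T * A + (1\<^sub>m n - R)"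
  have AtA: "A\<^sup>T * A \<in> carrier_mat n n" using A by auto
  have IR: "1\<^sub>m n - R \<in> carrier_mat n n" using minus_carrier_mat[OF R] .
  have "x = 0\<^sub>v n" if x: "x \<in> carrier_vec n" and Mx: "?M *\<^sub>v x = 0\<^sub>v n" for x
  proof -
    have "A\<^sup>T *\<^sub>v (A *\<^sub>v x) = (R * ?M) *\<^sub>v x"
      using A x by (simp add: RM)
    also have "\<dots> = R *\<^sub>v (?M *\<^sub>v x)"
      using AtA IR R x by (intro assoc_mult_mat_vec) auto
    finally have "A\<^sup>T *\<^sub>v (A *\<^sub>v x) = 0\<^sub>v n"
      using Mx R by simp
    then have "(A *\<^sub>v x) \<bullet> (A *\<^sub>v x) = 0"
      using transpose_vec_mult_scalar[OF A x, of "A *\<^sub>v x"] A x by simp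
    then have "A *\<^sub>v x = 0\<^sub>v m"
      using scalar_prod_self_eq_0_iff[of "A *\<^sub>v x" m] A x by simp
    then have "?M *\<^sub>v x = x"
      using kernel[OF x] A R IR x
      by (simp add: add_mult_distrib_mat_vec[of _ n n] minus_mult_distrib_mat_vec[of _ n n]
          assoc_mult_mat_vec[of _ n m _ n])
    with Mx show ?thesis by simp
  qed
  then show ?thesis
    using det_0_iff_vec_prod_zero[of ?M n] AtA IR by auto
qed

lemma pseudoinverse_from_gram_inverse:
  fixes A R N :: "real mat"
  assumes A: "A \<in> carrier_mat m n" and R: "R \<in> carrier_mat n n" "R\<^sup>T = R"
    and AR: "A * R = A" and RAt: "R * A\<^sup>T = A\<^sup>T"
    and N: "N \<in> carrier_mat n n" "N\<^sup>T = N" and NR: "N * R = R * N" and NAtA: "N * (A\<^sup>T * A) = R"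
  shows "is_pseudoinverse A (N * A\<^sup>T)"
proof -
  define X where "X = N * A\<^sup>T"
  have At: "A\<^sup>T \<in> carrier_mat n m" using A by simp
  have X: "X \<in> carrier_mat n m" unfolding X_def using N At by simp
  have XA: "X * A = R"
    unfolding X_def using assoc_mult_mat[OF N(1) At A] NAtA by simp
  have "A * X * A = A" using XA AR A X by (simp add: assoc_mult_mat[of A m n X m A n])
  moreover have "X * A * X = X"
  proof -
    have "X * A * X = R * X" by (simp add: XA)
    also have "\<dots> = R * (N * A\<^sup>T)" by (simp add: X_def)
    also have "\<dots> = (N * R) * A\<^sup>T" using assoc_mult_mat[OF R(1) N(1) At] NR by simp
    also have "\<dots> = N * (R * A\<^sup>T)" using assoc_mult_mat[OF N(1) R(1) At] .
    finally show ?thesis using RAt X_def by simp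
  qed
  moreover have "(A * X)\<^sup>T = A * X"
  proof -
    have "(A * X)\<^sup>T = (N * A\<^sup>T)\<^sup>T * A\<^sup>T"
      unfolding X_def using transpose_mult[OF A X[unfolded X_def]] .
    also have "\<dots> = A * X"
      unfolding X_def using A N At by (simp add: transpose_mult[of N n n] assoc_mult_mat[OF A N(1) At])
    finally show ?thesis .
  qed
  moreover have "(X * A)\<^sup>T = X * A" using XA R by simp
  ultimately show ?thesis
    unfolding is_pseudoinverse_def X_def[symmetric] using X A by auto
qed

lemma pseudoinverse_exists: "\<exists>X. is_pseudoinverse A X"
proof -
  define m n where "m = dim_row A" and "n = dim_col A"
  have A: "A \<in> carrier_mat m n" unfolding m_def n_def by auto
  obtain R where R: "R \<in> carrier_mat n n" "R\<^sup>T = R" and RR: "R * R = R" and AR: "A * R = A"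
    and kernel: "\<And>x. x \<in> carrier_vec n \<Longrightarrow> A *\<^sub>v x = 0\<^sub>v m \<Longrightarrow> R *\<^sub>v x = 0\<^sub>v n"
    using row_space_projection_exists[OF A] by blast
  have RAt: "R * A\<^sup>T = A\<^sup>T"
    using arg_cong[OF AR, of transpose_mat] A R by (simp add: transpose_mult)
  define M where "M = A\<^sup>T * A + (1\<^sub>m n - R)"
  have M: "M \<in> carrier_mat n n" "M\<^sup>T = M"
    unfolding M_def using A R minus_carrier_mat[OF R(1)]
    by (auto simp: transpose_add[of _ n n] transpose_minus[of _ n n] transpose_mult)
  have RM: "R * M = A\<^sup>T * A" and MR: "M * R = A\<^sup>T * A"
    unfolding M_def using row_projection_mult_gram_plus_complement[OF A R(1) RR AR RAt] by auto
  have "det M \<noteq> 0"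
    unfolding M_def using gram_plus_projection_complement_nonsingular[OF A R(1) RM[unfolded M_def] kernel] .
  then obtain N where N: "N \<in> carrier_mat n n" and NM: "N * M = 1\<^sub>m n" and MN: "M * N = 1\<^sub>m n"
    using det_non_zero_imp_unit[OF M(1), of "()"] unfolding Units_def ring_mat_def by auto
  have "N\<^sup>T = N"
    using inverse_of_symmetric_mat_is_symmetric[OF M N NM MN] .
  moreover have "N * R = R * N"
    using inverse_mat_commutes[OF M(1) N R(1) NM MN] RM MR by simp
  moreover have "N * (A\<^sup>T * A) = R"
    using assoc_mult_mat[OF N M(1) R(1)] NM MR R by simp
  ultimately show ?thesis
    using pseudoinverse_from_gram_inverse[OF A R AR RAt N] by blast
qed

lemma pseudoinverse_unique:
  assumes X: "is_pseudoinverse A X" and Y: "is_pseudoinverse A Y"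
  shows "X = Y"
proof -
  define m n where "m = dim_row A" and "n = dim_col A"
  have A: "A \<in> carrier_mat m n" unfolding m_def n_def by auto
  have Xc: "X \<in> carrier_mat n m" and X1: "A * X * A = A" and X2: "X * A * X = X"
    and X3: "(A * X)\<^sup>T = A * X" and X4: "(X * A)\<^sup>T = X * A"
    using X unfolding is_pseudoinverse_def m_def n_def by auto
  have Yc: "Y \<in> carrier_mat n m" and Y1: "A * Y * A = A" and Y2: "Y * A * Y = Y"
    and Y3: "(A * Y)\<^sup>T = A * Y" and Y4: "(Y * A)\<^sup>T = Y * A"
    using Y unfolding is_pseudoinverse_def m_def n_def by auto
  have AXc: "A * X \<in> carrier_mat m m" and AYc: "A * Y \<in> carrier_mat m m"
    and XAc: "X * A \<in> carrier_mat n n" and YAc: "Y * A \<in> carrier_mat n n"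
    using A Xc Yc by auto
  have AX_eq: "A * X = A * Y"
  proof -
    have "A * X = (A * Y) * (A * X)" using assoc_mult_mat[OF AYc A Xc] Y1 by simp
    then have "A * X = (A * X) * (A * Y)"
      using arg_cong[of _ _ transpose_mat] transpose_mult[OF AYc AXc] X3 Y3 by metis
    also have "\<dots> = A * Y" using assoc_mult_mat[OF AXc A Yc] X1 by simp
    finally show ?thesis .
  qed
  have XA_eq: "X * A = Y * A"
  proof -
    have "X * A = (X * A) * (Y * A)"
      using assoc_mult_mat[OF Xc A YAc] assoc_mult_mat[OF A Yc A] Y1 by simp
    then have "X * A = (Y * A) * (X * A)"
      using arg_cong[of _ _ transpose_mat] transpose_mult[OF XAc YAc] X4 Y4 by metis
    also have "\<dots> = Y * A"
      using assoc_mult_mat[OF Yc A XAc] assoc_mult_mat[OF A Xc A] X1 by simp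
    finally show ?thesis .
  qed
  have "X = Y * (A * X)" using X2 XA_eq assoc_mult_mat[OF Yc A Xc] by simp
  also have "\<dots> = Y" using AX_eq Y2 assoc_mult_mat[OF Yc A Yc] by simp
  finally show ?thesis .
qed

lemma pinv_is_pseudoinverse: "is_pseudoinverse A (pinv A)"
proof -
  have "pinv A = (THE X. is_pseudoinverse A X)"
    unfolding pinv_def is_pseudoinverse_def ..
  then show ?thesis
    using pseudoinverse_exists pseudoinverse_unique theI'[of "is_pseudoinverse A"] by metis
qed

lemma pinv_carrier: "pinv A \<in> carrier_mat (dim_col A) (dim_row A)"
  using pinv_is_pseudoinverse[of A] unfolding is_pseudoinverse_def by blast

lemma pseudoinverse_transpose:
  assumes "is_pseudoinverse A X"
  shows "is_pseudoinverse A\<^sup>T X\<^sup>T"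
proof -
  define m n where "m = dim_row A" and "n = dim_col A"
  have A: "A \<in> carrier_mat m n" unfolding m_def n_def by auto
  have Xc: "X \<in> carrier_mat n m" and X1: "A * X * A = A" and X2: "X * A * X = X"
    and X3: "(A * X)\<^sup>T = A * X" and X4: "(X * A)\<^sup>T = X * A"
    using assms unfolding is_pseudoinverse_def m_def n_def by auto
  have At: "A\<^sup>T \<in> carrier_mat n m" and Xt: "X\<^sup>T \<in> carrier_mat m n" using A Xc by auto
  have AtXt: "A\<^sup>T * X\<^sup>T = X * A" and XtAt: "X\<^sup>T * A\<^sup>T = A * X"
    using X3 X4 transpose_mult[OF Xc A] transpose_mult[OF A Xc] by simp_all
  have "A\<^sup>T * X\<^sup>T * A\<^sup>T = A\<^sup>T * (A * X)\<^sup>T"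
    using assoc_mult_mat[OF At Xt At] transpose_mult[OF A Xc] by simp
  also have "\<dots> = (A * X * A)\<^sup>T"
    using transpose_mult[of "A * X" m m A n] A Xc by simp
  finally have AXA: "A\<^sup>T * X\<^sup>T * A\<^sup>T = A\<^sup>T" using X1 by simp
  have "X\<^sup>T * A\<^sup>T * X\<^sup>T = X\<^sup>T * (X * A)\<^sup>T"
    using assoc_mult_mat[OF Xt At Xt] transpose_mult[OF Xc A] by simp
  also have "\<dots> = (X * A * X)\<^sup>T"
    using transpose_mult[of "X * A" n n X m] A Xc by simp
  finally have XAX: "X\<^sup>T * A\<^sup>T * X\<^sup>T = X\<^sup>T" using X2 by simp
  show ?thesis
    unfolding is_pseudoinverse_def using Xt AtXt XtAt X3 X4 AXA XAX A by auto
qed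

lemma pinv_transpose: "pinv A\<^sup>T = (pinv A)\<^sup>T"
  using pseudoinverse_unique[OF pinv_is_pseudoinverse pseudoinverse_transpose[OF pinv_is_pseudoinverse]] .

lemma pinv_transpose_mult_vec:
  assumes A: "A \<in> carrier_mat k n" and B: "B \<in> carrier_mat m n" and r: "r \<in> carrier_vec m"
  shows "pinv A\<^sup>T *\<^sub>v (B\<^sup>T *\<^sub>v r) = (B * pinv A)\<^sup>T *\<^sub>v r"
proof -
  have P: "pinv A \<in> carrier_mat n k" using pinv_carrier[of A] A by simp
  have Pt: "pinv A\<^sup>T \<in> carrier_mat k n" using pinv_carrier[of "A\<^sup>T"] A by simp
  have "(B * pinv A)\<^sup>T = pinv A\<^sup>T * B\<^sup>T"
    using transpose_mult[OF B P] pinv_transpose[of A] by simp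
  then show ?thesis
    using assoc_mult_mat_vec[OF Pt _ r, of "B\<^sup>T"] B by simp
qed


section \<open>Decoupling of the sum\<close>

lemma sum_nonneg_for_all_choices_iff:
  fixes f :: "'i \<Rightarrow> 'a \<Rightarrow> real"
  assumes "finite I" and z: "\<And>i. i \<in> I \<Longrightarrow> z i \<in> C i \<and> f i (z i) = 0"
  shows "(\<forall>\<rho>. (\<forall>i\<in>I. \<rho> i \<in> C i) \<longrightarrow> 0 \<le> (\<Sum>i\<in>I. f i (\<rho> i))) \<longleftrightarrow> (\<forall>i\<in>I. \<forall>r\<in>C i. 0 \<le> f i r)"
proof
  assume all: "\<forall>\<rho>. (\<forall>i\<in>I. \<rho> i \<in> C i) \<longrightarrow> 0 \<le> (\<Sum>i\<in>I. f i (\<rho> i))"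
  show "\<forall>i\<in>I. \<forall>r\<in>C i. 0 \<le> f i r"
  proof (intro ballI)
    fix i r assume i: "i \<in> I" and r: "r \<in> C i"
    have "(\<Sum>j\<in>I. f j ((z(i := r)) j)) = f i r + (\<Sum>j\<in>I - {i}. f j (z j))"
      using \<open>finite I\<close> i by (simp add: sum.remove)
    also have "(\<Sum>j\<in>I - {i}. f j (z j)) = 0"
      using z by (intro sum.neutral) blast
    finally show "0 \<le> f i r"
      using all[rule_format, of "z(i := r)"] z r by auto
  qed
qed (auto intro: sum_nonneg)

lemma shifted_choices_sum_nonneg_iff:
  fixes f :: "nat \<Rightarrow> 'a \<Rightarrow> real"
  assumes c: "0 < c" and z: "\<And>t. t < T \<Longrightarrow> z t \<in> C t \<and> f t (z t) = 0"
  shows "(\<forall>\<rho>. (\<forall>t<T. \<rho> (Suc t) \<in> C t) \<longrightarrow> c * (\<Sum>t<T. f t (\<rho> (Suc t))) \<ge> 0)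
     \<longleftrightarrow> (\<forall>t<T. \<forall>r\<in>C t. 0 \<le> f t r)"
proof -
  have "(\<forall>\<rho>. (\<forall>t<T. \<rho> (Suc t) \<in> C t) \<longrightarrow> c * (\<Sum>t<T. f t (\<rho> (Suc t))) \<ge> 0)
      \<longleftrightarrow> (\<forall>\<sigma>. (\<forall>t\<in>{..<T}. \<sigma> t \<in> C t) \<longrightarrow> 0 \<le> (\<Sum>t\<in>{..<T}. f t (\<sigma> t)))"
  proof (intro iffI allI impI)
    fix \<sigma> assume all: "\<forall>\<rho>. (\<forall>t<T. \<rho> (Suc t) \<in> C t) \<longrightarrow> c * (\<Sum>t<T. f t (\<rho> (Suc t))) \<ge> 0"
      and "\<forall>t\<in>{..<T}. \<sigma> t \<in> C t"
    then show "0 \<le> (\<Sum>t\<in>{..<T}. f t (\<sigma> t))"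
      using all[rule_format, of "\<lambda>s. \<sigma> (s - 1)"] c by (simp add: zero_le_mult_iff)
  next
    fix \<rho> assume all: "\<forall>\<sigma>. (\<forall>t\<in>{..<T}. \<sigma> t \<in> C t) \<longrightarrow> 0 \<le> (\<Sum>t\<in>{..<T}. f t (\<sigma> t))"
      and "\<forall>t<T. \<rho> (Suc t) \<in> C t"
    then show "c * (\<Sum>t<T. f t (\<rho> (Suc t))) \<ge> 0"
      using all[rule_format, of "\<lambda>t. \<rho> (Suc t)"] c by simp
  qed
  also have "\<dots> \<longleftrightarrow> (\<forall>t\<in>{..<T}. \<forall>r\<in>C t. 0 \<le> f t r)"
    using z by (intro sum_nonneg_for_all_choices_iff) auto
  finally show ?thesis by auto
qed


theorem proposition2:
  fixes T nx :: nat and p :: "nat \<Rightarrow> nat" and Q :: "nat \<Rightarrow> real mat"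
  assumes "T \<ge> 1"
    and "\<forall>t\<le>T. Q t \<in> carrier_mat (p t) nx"
    and "\<forall>t<T. row_space (Q (Suc t)) \<subseteq> row_space (Q t)"
  shows "(\<forall>rho :: nat \<Rightarrow> real vec.
            (\<forall>t<T. rho (Suc t) \<in> carrier_vec (p (Suc t))) \<longrightarrow>
            (1/4) * (\<Sum>t<T. (vnorm (rho (Suc t)))\<^sup>2
               - (vnorm (pinv (transpose_mat (Q t)) *\<^sub>v (transpose_mat (Q (Suc t)) *\<^sub>v rho (Suc t))))\<^sup>2) \<ge> 0)
         \<longleftrightarrow> (\<forall>t<T. max_sv (Q (Suc t) * pinv (Q t)) \<le> 1)"
proof -
  define X where "X t = Q (Suc t) * pinv (Q t)" for t
  define f where "f t r = (vnorm r)\<^sup>2 - (vnorm (pinv (Q t)\<^sup>T *\<^sub>v ((Q (Suc t))\<^sup>T *\<^sub>v r)))\<^sup>2" for t r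
  have Q: "Q t \<in> carrier_mat (p t) nx" "Q (Suc t) \<in> carrier_mat (p (Suc t)) nx" if "t < T" for t
    using assms(2) that by auto
  have X: "X t \<in> carrier_mat (p (Suc t)) (p t)" if "t < T" for t
    unfolding X_def using Q[OF that] pinv_carrier[of "Q t"] by auto
  have f_X: "f t r = (vnorm r)\<^sup>2 - (vnorm ((X t)\<^sup>T *\<^sub>v r))\<^sup>2"
    if "t < T" and "r \<in> carrier_vec (p (Suc t))" for t r
    unfolding f_def X_def using pinv_transpose_mult_vec Q[OF that(1)] that(2) by metis
  have "f t (0\<^sub>v (p (Suc t))) = 0" if "t < T" for t
  proof -
    have "(X t)\<^sup>T \<in> carrier_mat (p t) (p (Suc t))" using X[OF that] by simp
    then show ?thesis using f_X[OF that] by simp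
  qed
  moreover have "(\<forall>t<T. \<forall>r\<in>carrier_vec (p (Suc t)). 0 \<le> f t r) \<longleftrightarrow> (\<forall>t<T. max_sv (X t) \<le> 1)"
    using max_sv_le_one_iff_transpose[OF X] f_X by auto
  ultimately show ?thesis
    unfolding f_def[symmetric] X_def[symmetric]
    using shifted_choices_sum_nonneg_iff[of "1/4" T "\<lambda>t. 0\<^sub>v (p (Suc t))" "\<lambda>t. carrier_vec (p (Suc t))" f]
    by simp
qed

end
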